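(* Consider the following model of a Kater reversible pendulum. A rigid bar of length $L$ and mass $m_b$ carries two knife-edge pivots $c_1$ and $c_2$ placed symmetrically on the bar, with a linear coordinate along the bar having origin at $c_1$ and $c_2$ at $x=d>0$. A fixed disk of mass $m_f$ and radius $r_f$ is centred at $x_f$ with $(d-L)/2<x_f<0$, and a movable disk of mass $m_m$ and radius $r_m$ is centred at a variable position $x$. Let $m=m_b+m_f+m_m$, $K=\frac{\frac d2 m_b+x_f m_f}{m}$, and let $h_1=K+\frac{m_m}{m}x$, $h_2=d-h_1$ be the distances of the centre of mass from $c_1$ and $c_2$. Let \[ I_0''=\frac{r_f^2}{2}m_f+\frac{r_m^2}{2}m_m+\frac{L^2}{12}m_b,\qquad I_0'=I_0''+m_f(x_f-K)^2+m_b\left(\tfrac d2-K\right)^2+m_mK^2, \] and let $I_0=m_m\frac{m-m_m}{m}x^2-2m_mKx+I_0'$ be the moment of inertia about the centre of mass. The equivalent length for oscillation about $c_i$ is $l_i=\frac{I_0+mh_i^2}{mh_i}$, and a characteristic position is a position $x$ of the movable disk with $l_1=l_2$ (equivalently equal periods $T_i=2\pi\sqrt{l_i/g}$ of small oscillations about both pivots); the common value $l$ is the associated characteristic length. Then: (i) if the bar is sufficiently long, namely $\frac{m_f}{m_m}|d-2x_f|\le L$, the pendulum always admits the characteristic position \[ x_{0_1}=\frac d2+\frac{m_f}{2m_m}(d-2x_f), \] whose characteristic length \[ l(x_{0_1})=\frac d2+2\frac{I_0''}{md}+\frac{m_f(m_m+m_f)(d-2x_f)^2}{2m_m m d} \]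 does not in general coincide with the distance $d$ between the pivots; (ii) under the condition $m_md^2+4mdK-4mK^2-4I_0'\ge 0$, the pendulum admits two further characteristic positions \[ x_{0_{2,3}}=\frac d2\pm\frac12\sqrt{d^2+4\,\frac{mK^2-mdK+I_0'}{m_m}}, \] symmetric with respect to the midpoint $d/2$ between the pivots, whose common characteristic length is exactly $d$; (iii) the pendulum admits no further characteristic positions.
   Context: Small oscillations about pivot $c_i$ obey $\ddot\varphi+\frac{mgh_i}{I_i}\varphi=0$ with $I_i=I_0+mh_i^2$ (Huygens–Steiner), so the period is $T_i=2\pi\sqrt{I_i/(mgh_i)}$ and the equivalent (simple-pendulum) length is $l_i=I_i/(mh_i)$. *)

theory Defs
  imports Complex_Main
begin

definition kmass :: "real \<Rightarrow> real \<Rightarrow> real \<Rightarrow> real" where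
  "kmass mb mf mm = mb + mf + mm"

definition kK :: "real \<Rightarrow> real \<Rightarrow> real \<Rightarrow> real \<Rightarrow> real \<Rightarrow> real" where
  "kK mb mf mm d xf = (d / 2 * mb + xf * mf) / kmass mb mf mm"

definition h1 :: "real \<Rightarrow> real \<Rightarrow> real \<Rightarrow> real \<Rightarrow> real \<Rightarrow> real \<Rightarrow> real" where
  "h1 mb mf mm d xf x = kK mb mf mm d xf + mm / kmass mb mf mm * x"

definition h2 :: "real \<Rightarrow> real \<Rightarrow> real \<Rightarrow> real \<Rightarrow> real \<Rightarrow> real \<Rightarrow> real" where
  "h2 mb mf mm d xf x = d - h1 mb mf mm d xf x"

definition I0pp :: "real \<Rightarrow> real \<Rightarrow> real \<Rightarrow> real \<Rightarrow> real \<Rightarrow> real \<Rightarrow> real" where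
  "I0pp L mb mf rf mm rm = rf^2 / 2 * mf + rm^2 / 2 * mm + L^2 / 12 * mb"

definition I0p :: "real \<Rightarrow> real \<Rightarrow> real \<Rightarrow> real \<Rightarrow> real \<Rightarrow> real \<Rightarrow> real \<Rightarrow> real \<Rightarrow> real" where
  "I0p L mb mf rf xf mm rm d =
     (let K = kK mb mf mm d xf in
      I0pp L mb mf rf mm rm + mf * (xf - K)^2 + mb * (d / 2 - K)^2 + mm * K^2)"

definition I0 :: "real \<Rightarrow> real \<Rightarrow> real \<Rightarrow> real \<Rightarrow> real \<Rightarrow> real \<Rightarrow> real \<Rightarrow> real \<Rightarrow> real \<Rightarrow> real" where
  "I0 L mb mf rf xf mm rm d x =
     (let m = kmass mb mf mm; K = kK mb mf mm d xf in
      mm * (m - mm) / m * x^2 - 2 * mm * K * x + I0p L mb mf rf xf mm rm d)"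

definition l1 :: "real \<Rightarrow> real \<Rightarrow> real \<Rightarrow> real \<Rightarrow> real \<Rightarrow> real \<Rightarrow> real \<Rightarrow> real \<Rightarrow> real \<Rightarrow> real" where
  "l1 L mb mf rf xf mm rm d x =
     (let m = kmass mb mf mm; h = h1 mb mf mm d xf x in
      (I0 L mb mf rf xf mm rm d x + m * h^2) / (m * h))"

definition l2 :: "real \<Rightarrow> real \<Rightarrow> real \<Rightarrow> real \<Rightarrow> real \<Rightarrow> real \<Rightarrow> real \<Rightarrow> real \<Rightarrow> real \<Rightarrow> real" where
  "l2 L mb mf rf xf mm rm d x =
     (let m = kmass mb mf mm; h = h2 mb mf mm d xf x in
      (I0 L mb mf rf xf mm rm d x + m * h^2) / (m * h))"

text \<open>A characteristic position: both equivalent lengths are defined (h1, h2 nonzero) and equal.\<close>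
definition char_pos :: "real \<Rightarrow> real \<Rightarrow> real \<Rightarrow> real \<Rightarrow> real \<Rightarrow> real \<Rightarrow> real \<Rightarrow> real \<Rightarrow> real \<Rightarrow> bool" where
  "char_pos L mb mf rf xf mm rm d x \<longleftrightarrow>
     h1 mb mf mm d xf x \<noteq> 0 \<and> h2 mb mf mm d xf x \<noteq> 0 \<and>
     l1 L mb mf rf xf mm rm d x = l2 L mb mf rf xf mm rm d x"

end

theory Submission imports Defs begin

text \<open>Writing \<open>l\<^sub>i = I\<^sub>0/(m h\<^sub>i) + h\<^sub>i\<close>, the difference of the equivalent lengths factors as
  \<open>l\<^sub>1 - l\<^sub>2 = (h\<^sub>2 - h\<^sub>1)(I\<^sub>0 - m h\<^sub>1 h\<^sub>2)/(m h\<^sub>1 h\<^sub>2)\<close>. The first factor vanishes exactly when the centre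
  of mass is at the midpoint \<open>d/2\<close> of the pivots, i.e. at \<open>x\<^sub>0\<^sub>1\<close>. The second factor is
  \<open>m\<^sub>m((x - d/2)\<^sup>2 - disc/4)\<close>, a quadratic in \<open>x\<close> symmetric about \<open>d/2\<close>, whose roots are \<open>x\<^sub>0\<^sub>2\<close>,
  \<open>x\<^sub>0\<^sub>3\<close>; at these \<open>I\<^sub>0 = m h\<^sub>1 h\<^sub>2\<close> gives \<open>l\<^sub>1 = h\<^sub>2 + h\<^sub>1 = d\<close>, and \<open>I\<^sub>0 > 0\<close> (Huygens-Steiner)
  guarantees \<open>h\<^sub>1, h\<^sub>2 \<noteq> 0\<close> there.\<close>

lemma equivalent_length_eq_iff:
  fixes I m h1 h2 :: "'a::field"
  assumes "m \<noteq> 0" "h1 \<noteq> 0" "h2 \<noteq> 0"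
  shows "(I + m * h1^2) / (m * h1) = (I + m * h2^2) / (m * h2) \<longleftrightarrow> h1 = h2 \<or> I = m * h1 * h2"
proof -
  have "(I + m * h1^2) / (m * h1) = (I + m * h2^2) / (m * h2)
        \<longleftrightarrow> (I + m * h1^2) * h2 = (I + m * h2^2) * h1"
    using assms by (simp add: frac_eq_eq)
  also have "\<dots> \<longleftrightarrow> (h2 - h1) * (I - m * h1 * h2) = 0"
  proof -
    have "(I + m * h1^2) * h2 - (I + m * h2^2) * h1 = (h2 - h1) * (I - m * h1 * h2)"
      by (simp add: algebra_simps power2_eq_square)
    then show ?thesis
      by (metis eq_iff_diff_eq_0)
  qed
  finally show ?thesis by auto
qed

lemma equivalent_length_eq_sum:
  fixes I m h1 h2 :: "'a::field"
  assumes "m \<noteq> 0" "h1 \<noteq> 0" "I = m * h1 * h2"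
  shows "(I + m * h1^2) / (m * h1) = h1 + h2"
  using assms by (simp add: field_simps power2_eq_square)

lemma square_eq_quarter_iff:
  fixes x c D :: real
  shows "(x - c)^2 = D / 4 \<longleftrightarrow> 0 \<le> D \<and> (x = c + sqrt D / 2 \<or> x = c - sqrt D / 2)"
proof
  assume sq: "(x - c)^2 = D / 4"
  then have "0 \<le> D"
    by (metis zero_le_power2 le_divide_eq_numeral1(1) mult_zero_left)
  with sq have "(x - c)^2 = (sqrt D / 2)^2" by (simp add: power_divide)
  then have "x - c = sqrt D / 2 \<or> x - c = - (sqrt D / 2)" by (simp add: power2_eq_iff)
  with \<open>0 \<le> D\<close> show "0 \<le> D \<and> (x = c + sqrt D / 2 \<or> x = c - sqrt D / 2)" by auto
qed (auto simp: power_divide)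

lemma parallel_axis_identity:
  fixes M K t x Q mb mf mm d xf :: real
  assumes "M = mb + mf + mm" "M * K = d / 2 * mb + xf * mf" "M * t = mm * x"
  shows "mm * x^2 - mm * x * t - 2 * mm * K * x + (Q + mf * (xf - K)^2 + mb * (d / 2 - K)^2 + mm * K^2)
    = Q + mf * (xf - (K + t))^2 + mb * (d / 2 - (K + t))^2 + mm * (x - (K + t))^2"
  using assms by algebra

locale kater_pendulum =
  fixes L mb mf rf xf mm rm d :: real
  assumes mb_pos: "0 < mb" and mf_pos: "0 < mf" and mm_pos: "0 < mm"
    and I0pp_pos: "0 < I0pp L mb mf rf mm rm"
    and d_pos: "0 < d"
begin

abbreviation "m \<equiv> kmass mb mf mm"
abbreviation "K \<equiv> kK mb mf mm d xf"
abbreviation "I \<equiv> I0 L mb mf rf xf mm rm d"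
abbreviation "H1 \<equiv> h1 mb mf mm d xf"
abbreviation "H2 \<equiv> h2 mb mf mm d xf"
abbreviation "len1 \<equiv> l1 L mb mf rf xf mm rm d"
abbreviation "len2 \<equiv> l2 L mb mf rf xf mm rm d"
abbreviation "x01 \<equiv> d / 2 + mf / (2 * mm) * (d - 2 * xf)"
abbreviation "disc \<equiv> d^2 + 4 * (m * d * K - m * K^2 - I0p L mb mf rf xf mm rm d) / mm"

lemma m_pos: "0 < m"
  using mb_pos mf_pos mm_pos by (simp add: kmass_def)

lemma m_times_K: "m * K = d / 2 * mb + xf * mf"
  using m_pos by (simp add: kK_def)

lemma I0_parallel_axis:
  "I x = I0pp L mb mf rf mm rm + mf * (xf - H1 x)^2 + mb * (d / 2 - H1 x)^2 + mm * (x - H1 x)^2"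
proof -
  have mt: "m * (mm / m * x) = mm * x"
    using m_pos by simp
  have "I x = mm * x^2 - mm * x * (mm / m * x) - 2 * mm * K * x + I0p L mb mf rf xf mm rm d"
    unfolding I0_def Let_def using m_pos by (simp add: field_simps power2_eq_square)
  also have "\<dots> = I0pp L mb mf rf mm rm + mf * (xf - H1 x)^2 + mb * (d / 2 - H1 x)^2 + mm * (x - H1 x)^2"
    unfolding I0p_def Let_def h1_def
    by (rule parallel_axis_identity[OF _ m_times_K mt]) (simp add: kmass_def)
  finally show ?thesis .
qed

lemma I0_pos: "0 < I x"
proof -
  have "0 \<le> mf * (xf - H1 x)^2 + mb * (d / 2 - H1 x)^2 + mm * (x - H1 x)^2"
    using mb_pos mf_pos mm_pos by simp
  with I0pp_pos show ?thesis
    unfolding I0_parallel_axis by linarith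
qed

lemma len1_eq: "len1 x = (I x + m * (H1 x)^2) / (m * H1 x)"
  by (simp add: l1_def Let_def)

lemma len2_eq: "len2 x = (I x + m * (H2 x)^2) / (m * H2 x)"
  by (simp add: l2_def Let_def)

lemma H1_x01: "H1 x01 = d / 2"
proof -
  have "m * K + mm * x01 = m * (d / 2)"
    unfolding m_times_K using mm_pos by (simp add: kmass_def field_simps)
  then show ?thesis
    using m_pos by (simp add: h1_def field_simps)
qed

lemma H1_eq_H2_iff: "H1 x = H2 x \<longleftrightarrow> x = x01"
proof -
  have "H1 x - H1 x01 = mm / m * (x - x01)"
    by (simp add: h1_def algebra_simps diff_divide_distrib)
  then have shift: "H1 x - d / 2 = mm / m * (x - x01)"
    by (simp only: H1_x01)
  have "H1 x = H2 x \<longleftrightarrow> H1 x - d / 2 = 0"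
    by (auto simp: h2_def)
  also have "\<dots> \<longleftrightarrow> x = x01"
    unfolding shift using m_pos mm_pos by simp
  finally show ?thesis .
qed

lemma I0_minus_product: "I x - m * H1 x * H2 x = mm * ((x - d / 2)^2 - disc / 4)"
proof -
  have "I x - m * H1 x * H2 x = mm * (x^2 - d * x) + I0p L mb mf rf xf mm rm d - m * K * d + m * K^2"
    using m_pos unfolding I0_def h2_def h1_def Let_def
    by (simp add: field_simps power2_eq_square)
  also have "\<dots> = mm * ((x - d / 2)^2 - disc / 4)"
    using mm_pos by (simp add: field_simps power2_eq_square)
  finally show ?thesis .
qed

lemma I0_eq_product_iff: "I x = m * H1 x * H2 x \<longleftrightarrow> (x - d / 2)^2 = disc / 4"
proof -
  have "I x = m * H1 x * H2 x \<longleftrightarrow> I x - m * H1 x * H2 x = 0"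
    by simp
  also have "\<dots> \<longleftrightarrow> mm * ((x - d / 2)^2 - disc / 4) = 0"
    by (simp only: I0_minus_product)
  also have "\<dots> \<longleftrightarrow> (x - d / 2)^2 = disc / 4"
    using mm_pos by simp
  finally show ?thesis .
qed

lemma char_pos_iff:
  "char_pos L mb mf rf xf mm rm d x \<longleftrightarrow> x = x01 \<or> (x - d / 2)^2 = disc / 4"
proof -
  have "H1 x \<noteq> 0 \<and> H2 x \<noteq> 0" if "I x = m * H1 x * H2 x"
    using that I0_pos[of x] by auto
  moreover have "H1 x01 \<noteq> 0 \<and> H2 x01 \<noteq> 0"
    using H1_x01 d_pos by (simp add: h2_def)
  ultimately show ?thesis
    unfolding char_pos_def len1_eq len2_eq I0_eq_product_iff[symmetric]
    using equivalent_length_eq_iff[OF m_pos[THEN less_imp_neq, symmetric]] H1_eq_H2_iff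
    by blast
qed

lemma len1_at_symmetric_root:
  assumes "(x - d / 2)^2 = disc / 4"
  shows "len1 x = d"
proof -
  have prod: "I x = m * H1 x * H2 x"
    using I0_eq_product_iff assms by simp
  then have "H1 x \<noteq> 0"
    using I0_pos[of x] by auto
  with prod m_pos show ?thesis
    unfolding len1_eq by (simp add: equivalent_length_eq_sum h2_def)
qed

lemma len1_x01:
  "len1 x01 = d / 2 + 2 * I0pp L mb mf rf mm rm / (m * d) + mf * (mm + mf) * (d - 2 * xf)^2 / (2 * mm * m * d)"
proof -
  have I_x01: "I x01 = I0pp L mb mf rf mm rm + mf * (mm + mf) * (d - 2 * xf)^2 / (4 * mm)"
    unfolding I0_parallel_axis H1_x01 using mm_pos by (simp add: field_simps power2_eq_square)
  have "len1 x01 = d / 2 + 2 * I x01 / (m * d)"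
    using m_pos d_pos unfolding len1_eq H1_x01
    by (simp add: field_simps power2_eq_square)
  also have "\<dots> = d / 2 + 2 * I0pp L mb mf rf mm rm / (m * d) + mf * (mm + mf) * (d - 2 * xf)^2 / (2 * mm * m * d)"
    unfolding I_x01 using m_pos mm_pos d_pos by (simp add: field_simps)
  finally show ?thesis .
qed

lemma x01_on_bar:
  assumes "mf / mm * \<bar>d - 2 * xf\<bar> \<le> L" "xf < d / 2"
  shows "x01 \<in> {(d - L) / 2 .. (d + L) / 2}"
proof -
  have "d / 2 + u / 2 \<in> {(d - L) / 2 .. (d + L) / 2}" if "0 \<le> u" "u \<le> L" for u
    using that by simp
  moreover have "0 \<le> mf / mm * (d - 2 * xf)" "mf / mm * (d - 2 * xf) \<le> L"
    using assms mf_pos mm_pos by auto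
  ultimately show ?thesis
    by (metis times_divide_eq_left divide_divide_eq_left mult.commute)
qed

lemma disc_nonneg:
  assumes "mm * d^2 + 4 * m * d * K - 4 * m * K^2 - 4 * I0p L mb mf rf xf mm rm d \<ge> 0"
  shows "0 \<le> disc"
proof -
  have "disc = (mm * d^2 + 4 * m * d * K - 4 * m * K^2 - 4 * I0p L mb mf rf xf mm rm d) / mm"
    using mm_pos by (simp add: field_simps)
  with assms mm_pos show ?thesis by simp
qed

end

theorem corollary2:
  fixes L mb mf rf xf mm rm d :: real
  assumes "L > 0" "mb > 0" "mf > 0" "mm > 0" "rf > 0" "rm > 0" "d > 0"
    and "(d - L) / 2 < xf" "xf < 0"
  defines "m \<equiv> kmass mb mf mm"
    and "K \<equiv> kK mb mf mm d xf"
    and "x01 \<equiv> d / 2 + mf / (2 * mm) * (d - 2 * xf)"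
    and "disc \<equiv> d^2 + 4 * (kmass mb mf mm * d * kK mb mf mm d xf - kmass mb mf mm * (kK mb mf mm d xf)^2
                        - I0p L mb mf rf xf mm rm d) / mm"
    and "x02 \<equiv> d / 2 + sqrt (d^2 + 4 * (kmass mb mf mm * d * kK mb mf mm d xf - kmass mb mf mm * (kK mb mf mm d xf)^2 - I0p L mb mf rf xf mm rm d) / mm) / 2"
    and "x03 \<equiv> d / 2 - sqrt (d^2 + 4 * (kmass mb mf mm * d * kK mb mf mm d xf - kmass mb mf mm * (kK mb mf mm d xf)^2 - I0p L mb mf rf xf mm rm d) / mm) / 2"
  shows
    "(mf / mm * \<bar>d - 2 * xf\<bar> \<le> L \<longrightarrow>
        x01 \<in> {(d - L) / 2 .. (d + L) / 2} \<and>
        char_pos L mb mf rf xf mm rm d x01 \<and>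
        l1 L mb mf rf xf mm rm d x01 =
          d / 2 + 2 * I0pp L mb mf rf mm rm / (m * d)
          + mf * (mm + mf) * (d - 2 * xf)^2 / (2 * mm * m * d))
   \<and> (mm * d^2 + 4 * m * d * K - 4 * m * K^2 - 4 * I0p L mb mf rf xf mm rm d \<ge> 0 \<longrightarrow>
        char_pos L mb mf rf xf mm rm d x02 \<and> char_pos L mb mf rf xf mm rm d x03 \<and>
        l1 L mb mf rf xf mm rm d x02 = d \<and> l1 L mb mf rf xf mm rm d x03 = d)
   \<and> (\<forall>x. char_pos L mb mf rf xf mm rm d x \<longrightarrow>
        x = x01 \<or> (disc \<ge> 0 \<and> (x = x02 \<or> x = x03)))"
proof -
  have "0 < I0pp L mb mf rf mm rm"
    using assms(2-6) unfolding I0pp_def by (intro add_pos_nonneg add_nonneg_nonneg) auto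
  then interpret kater_pendulum L mb mf rf xf mm rm d
    using assms(2-4,7) by unfold_locales
  have roots: "(x - d / 2)^2 = disc / 4 \<longleftrightarrow> 0 \<le> disc \<and> (x = x02 \<or> x = x03)" for x
    unfolding x02_def x03_def disc_def by (rule square_eq_quarter_iff)
  have "mf / mm * \<bar>d - 2 * xf\<bar> \<le> L \<longrightarrow>
        x01 \<in> {(d - L) / 2 .. (d + L) / 2} \<and> char_pos L mb mf rf xf mm rm d x01 \<and>
        l1 L mb mf rf xf mm rm d x01 =
          d / 2 + 2 * I0pp L mb mf rf mm rm / (m * d) + mf * (mm + mf) * (d - 2 * xf)^2 / (2 * mm * m * d)"
    using x01_on_bar \<open>xf < 0\<close> \<open>d > 0\<close> char_pos_iff len1_x01 unfolding x01_def m_def by simp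
  moreover have "mm * d^2 + 4 * m * d * K - 4 * m * K^2 - 4 * I0p L mb mf rf xf mm rm d \<ge> 0 \<longrightarrow>
        char_pos L mb mf rf xf mm rm d x02 \<and> char_pos L mb mf rf xf mm rm d x03 \<and>
        l1 L mb mf rf xf mm rm d x02 = d \<and> l1 L mb mf rf xf mm rm d x03 = d"
    using disc_nonneg roots char_pos_iff len1_at_symmetric_root unfolding disc_def m_def K_def by blast
  moreover have "\<forall>x. char_pos L mb mf rf xf mm rm d x \<longrightarrow> x = x01 \<or> (disc \<ge> 0 \<and> (x = x02 \<or> x = x03))"
    using char_pos_iff roots unfolding x01_def disc_def by blast
  ultimately show ?thesis
    by blast
qed

end
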